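(* Suppose that the bivariate copula $A$ allows a continuous Markov kernel $K_A$. Then $$\lim_{N\to\infty}\sup_{(x,y)\in[0,1]^2}\left|K_{\mathcal{B}_N(A)}(x,[0,y])-K_A(x,[0,y])\right|=0,$$ i.e. $(\mathcal{B}_N(A))_{N\in\mathbb{N}}$ converges uniformly conditional to $A$.
   Context: A (bivariate) copula is a distribution function on $[0,1]^2$ with uniform marginals; each copula $B$ corresponds to a doubly stochastic measure $\mu_B$ with $B(x,y)=\mu_B([0,x]\times[0,y])$. A Markov kernel of $B$ is a map $K_B:[0,1]\times\mathcal{B}([0,1])\to[0,1]$, measurable in the first argument, a probability measure in the second, with $\int_{E_1}K_B(x,E_2)\,d\lambda(x)=\mu_B(E_1\times E_2)$ for all Borel $E_1,E_2$ ($\lambda$ = Lebesgue measure). $A$ allows a continuous Markov kernel if it has a version $K_A$ with $(x,y)\mapsto K_A(x,[0,y])$ continuous on $[0,1]^2$; $K_A$ denotes this version. Bernstein approximation: $p_{N,k}(u)=\binom Nk u^k(1-u)^{N-k}$ for $k\in\{0,\dots,N\}$ and $p_{N,k}\equiv0$ otherwise; $\mathcal{B}_N(A)(x,y)=\sum_{i,j=1}^N A(\tfrac iN,\tfrac jN)p_{N,i}(x)p_{N,j}(y)$, with Markov kernel version $K_{\mathcal{B}_N(A)}(x,[0,y])=N\sum_{i,j=1}^N A(\tfrac iN,\tfrac jN)\big(p_{N-1,i-1}(x)-p_{N-1,i}(x)\big)p_{N,j}(y)$. *)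

theory Defs
  imports "HOL-Probability.Probability"
begin

definition is_copula :: "(real \<Rightarrow> real \<Rightarrow> real) \<Rightarrow> bool" where
  "is_copula A \<longleftrightarrow>
     (\<forall>t\<in>{0..1}. A t 0 = 0 \<and> A 0 t = 0 \<and> A t 1 = t \<and> A 1 t = t) \<and>
     (\<forall>x1\<in>{0..1}. \<forall>x2\<in>{0..1}. \<forall>y1\<in>{0..1}. \<forall>y2\<in>{0..1}.
        x1 \<le> x2 \<longrightarrow> y1 \<le> y2 \<longrightarrow> A x2 y2 - A x1 y2 - A x2 y1 + A x1 y1 \<ge> 0)"

definition copula_measure :: "(real \<Rightarrow> real \<Rightarrow> real) \<Rightarrow> (real \<times> real) measure \<Rightarrow> bool" where
  "copula_measure A \<mu> \<longleftrightarrow>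
     sets \<mu> = sets borel \<and> finite_measure \<mu> \<and>
     emeasure \<mu> (UNIV - {0..1} \<times> {0..1}) = 0 \<and>
     (\<forall>x\<in>{0..1}. \<forall>y\<in>{0..1}. measure \<mu> ({0..x} \<times> {0..y}) = A x y)"

definition markov_kernel_of :: "(real \<Rightarrow> real \<Rightarrow> real) \<Rightarrow> (real \<Rightarrow> real measure) \<Rightarrow> bool" where
  "markov_kernel_of A K \<longleftrightarrow>
     (\<exists>\<mu>. copula_measure A \<mu> \<and>
       (\<forall>x\<in>{0..1}. prob_space (K x) \<and> sets (K x) = sets (restrict_space borel {0..1::real})) \<and>
       (\<forall>E\<in>sets (restrict_space borel {0..1::real}).
          (\<lambda>x. measure (K x) E) \<in> borel_measurable (restrict_space borel {0..1::real})) \<and>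
       (\<forall>E1\<in>sets (restrict_space borel {0..1::real}). \<forall>E2\<in>sets (restrict_space borel {0..1::real}).
          (LINT x:E1|lborel. measure (K x) E2) = measure \<mu> (E1 \<times> E2)))"

definition continuous_markov_kernel_of :: "(real \<Rightarrow> real \<Rightarrow> real) \<Rightarrow> (real \<Rightarrow> real measure) \<Rightarrow> bool" where
  "continuous_markov_kernel_of A K \<longleftrightarrow> markov_kernel_of A K \<and>
     continuous_on ({0..1} \<times> {0..1}) (\<lambda>(x, y). measure (K x) {0..y})"

definition bern :: "nat \<Rightarrow> nat \<Rightarrow> real \<Rightarrow> real" where
  "bern N k u = (if k \<le> N then real (N choose k) * u ^ k * (1 - u) ^ (N - k) else 0)"

text \<open>The Markov kernel version K_{B_N(A)}(x,[0,y]) of the Bernstein approximation.\<close>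
definition bernstein_kernel :: "nat \<Rightarrow> (real \<Rightarrow> real \<Rightarrow> real) \<Rightarrow> real \<Rightarrow> real \<Rightarrow> real" where
  "bernstein_kernel N A x y =
     real N * (\<Sum>i=1..N. \<Sum>j=1..N. A (real i / real N) (real j / real N) *
        (bern (N - 1) (i - 1) x - bern (N - 1) i x) * bern N j y)"

end

theory Submission
  imports Defs
begin

(* Write F(x, y) = K_A(x, [0, y]); disintegration gives A(x, y) = integral of F(t, y) over
   t in [0, x]. Summation by parts in x turns K_{B_N(A)}(x, [0, y]) into an average, with respect
   to the product Bernstein weights p_{N-1,i}(x) p_{N,j}(y), of the difference quotients
   N (A((i+1)/N, j/N) - A(i/N, j/N)), i.e. of the means of F(., j/N) over [i/N, (i+1)/N], a cell
   containing the node i/(N-1). As in Bernstein's proof of the Weierstrass theorem, uniform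
   continuity and boundedness of F on the square give |F p - F q| <= e + C |p - q|^2, and the
   variance x(1-x)/n of the Bernstein weights (n = N - 1 or N) turns the quadratic term into
   O(C/N), uniformly in (x, y). *)

lemma bern_eq_Bernstein: "k \<le> N \<Longrightarrow> bern N k u = Bernstein N k u"
  by (simp add: bern_def Bernstein_def)

lemma sum_bern_diff_by_parts:
  fixes g :: "nat \<Rightarrow> real"
  assumes "g 0 = 0"
  shows "(\<Sum>i=1..Suc n. g i * (bern n (i - 1) x - bern n i x))
       = (\<Sum>i\<le>n. (g (Suc i) - g i) * Bernstein n i x)"
proof -
  have shifted: "(\<Sum>i=1..Suc n. g i * bern n (i - 1) x) = (\<Sum>i\<le>n. g (Suc i) * Bernstein n i x)"
    unfolding One_nat_def sum.shift_bounds_cl_Suc_ivl atLeast0AtMost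
    by (intro sum.cong refl) (simp add: bern_eq_Bernstein)
  have dropped: "(\<Sum>i=1..Suc n. g i * bern n i x) = (\<Sum>i\<le>n. g i * Bernstein n i x)"
    using assms
    by (simp add: sum_shift_lb_Suc0_0 atLeast0AtMost bern_def Bernstein_def)
  show ?thesis
    unfolding right_diff_distrib left_diff_distrib sum_subtractf shifted dropped ..
qed

lemma bernstein_kernel_eq_Bernstein_sum:
  assumes "\<And>t. t \<in> {0..1} \<Longrightarrow> A 0 t = 0" and "\<And>t. t \<in> {0..1} \<Longrightarrow> A t 0 = 0"
  shows "bernstein_kernel (Suc n) A x y =
    (\<Sum>i\<le>n. \<Sum>j\<le>Suc n. real (Suc n) *
        (A (real (Suc i) / real (Suc n)) (real j / real (Suc n))
          - A (real i / real (Suc n)) (real j / real (Suc n)))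
        * Bernstein n i x * Bernstein (Suc n) j y)" (is "_ = ?rhs")
proof -
  define g where "g j i = A (real i / real (Suc n)) (real j / real (Suc n))" for j i :: nat
  have g_left: "g j 0 = 0" if "j \<le> Suc n" for j
    using assms(1)[of "real j / real (Suc n)"] that by (simp add: g_def)
  have g_bottom: "g 0 i = 0" if "i \<le> Suc n" for i
    using assms(2)[of "real i / real (Suc n)"] that by (simp add: g_def)
  have "bernstein_kernel (Suc n) A x y
      = (\<Sum>j=1..Suc n. real (Suc n) *
          (\<Sum>i=1..Suc n. g j i * (bern n (i - 1) x - bern n i x)) * bern (Suc n) j y)"
    unfolding bernstein_kernel_def g_def sum_distrib_left sum_distrib_right
    by (subst sum.swap) (simp only: diff_Suc_1 mult_ac)
  also have "\<dots> = (\<Sum>j=1..Suc n. real (Suc n) *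
      (\<Sum>i\<le>n. (g j (Suc i) - g j i) * Bernstein n i x) * bern (Suc n) j y)"
    using sum_bern_diff_by_parts[of "g _"] g_left by (intro sum.cong refl) simp
  also have "\<dots> = (\<Sum>j\<le>Suc n. real (Suc n) *
      (\<Sum>i\<le>n. (g j (Suc i) - g j i) * Bernstein n i x) * Bernstein (Suc n) j y)"
    unfolding One_nat_def
    by (subst sum_shift_lb_Suc0_0, use g_bottom in simp)
      (unfold atLeast0AtMost, intro sum.cong refl, simp add: bern_eq_Bernstein)
  also have "\<dots> = ?rhs"
    unfolding g_def by (subst sum.swap) (simp add: sum_distrib_left sum_distrib_right mult_ac)
  finally show ?thesis .
qed

lemma sum_Bernstein_variance:
  assumes "n > 0"
  shows "(\<Sum>k\<le>n. (real k / n - x)\<^sup>2 * Bernstein n k x) = x * (1 - x) / n"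
proof -
  have square: "(a - b)\<^sup>2 * c = a * (a - 1) * c + (1 - 2 * b) * (a * c) + b\<^sup>2 * c" for a b c :: real
    by (simp add: algebra_simps power2_eq_square)
  have "(\<Sum>k\<le>n. (real k - n * x)\<^sup>2 * Bernstein n k x) = n * x * (1 - x)"
    by (simp add: square sum.distrib flip: sum_distrib_left) (simp add: algebra_simps power2_eq_square)
  moreover have "(real k / n - x)\<^sup>2 = (real k - n * x)\<^sup>2 / (real n)\<^sup>2" for k
    using assms by (simp add: field_simps)
  ultimately show ?thesis
    using assms by (simp add: sum_divide_distrib[symmetric] power2_eq_square)
qed

lemma abs_sum_Bernstein_le:
  fixes g :: "nat \<Rightarrow> real"
  assumes "n > 0" "x \<in> {0..1}" "b \<ge> 0"
    and g: "\<And>k. k \<le> n \<Longrightarrow> \<bar>g k\<bar> \<le> a + b * (real k / n - x)\<^sup>2"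
  shows "\<bar>\<Sum>k\<le>n. g k * Bernstein n k x\<bar> \<le> a + b / n"
proof -
  have nonneg: "Bernstein n k x \<ge> 0" for k
    using assms(2) by (simp add: Bernstein_nonneg)
  have "\<bar>\<Sum>k\<le>n. g k * Bernstein n k x\<bar> \<le> (\<Sum>k\<le>n. \<bar>g k\<bar> * Bernstein n k x)"
    by (rule order_trans[OF sum_abs]) (simp add: abs_mult nonneg)
  also have "\<dots> \<le> (\<Sum>k\<le>n. (a + b * (real k / n - x)\<^sup>2) * Bernstein n k x)"
    by (intro sum_mono mult_right_mono g nonneg) simp
  also have "\<dots> = a + b * (x * (1 - x) / n)"
    using assms(1)
    by (simp add: distrib_right sum.distrib mult.assoc sum_Bernstein_variance flip: sum_distrib_left)
  also have "\<dots> \<le> a + b / n"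
  proof -
    have "b * (x * (1 - x)) \<le> b"
      using assms by (intro mult_left_le) (auto simp: mult_le_one)
    then show ?thesis
      by (simp add: divide_right_mono)
  qed
  finally show ?thesis .
qed

lemma abs_sum_Bernstein_product_le:
  fixes G :: "nat \<Rightarrow> nat \<Rightarrow> real"
  assumes "n > 0" "m > 0" "x \<in> {0..1}" "y \<in> {0..1}" "b \<ge> 0" "c \<ge> 0"
    and G: "\<And>i j. i \<le> n \<Longrightarrow> j \<le> m \<Longrightarrow>
      \<bar>G i j\<bar> \<le> a + b * (real i / n - x)\<^sup>2 + c * (real j / m - y)\<^sup>2"
  shows "\<bar>\<Sum>i\<le>n. \<Sum>j\<le>m. G i j * Bernstein n i x * Bernstein m j y\<bar> \<le> a + b / n + c / m"
proof -
  have inner: "\<bar>\<Sum>j\<le>m. G i j * Bernstein m j y\<bar> \<le> (a + c / m) + b * (real i / n - x)\<^sup>2"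
    if "i \<le> n" for i
    using abs_sum_Bernstein_le[of m y c "G i" "a + b * (real i / n - x)\<^sup>2"] G[OF that] assms
    by simp
  have "\<bar>\<Sum>i\<le>n. (\<Sum>j\<le>m. G i j * Bernstein m j y) * Bernstein n i x\<bar> \<le> a + c / m + b / n"
    using inner assms by (intro abs_sum_Bernstein_le) auto
  then show ?thesis
    by (simp only: sum_distrib_left sum_distrib_right mult_ac add_ac)
qed

lemma power2_sum_le:
  fixes p q :: real
  shows "(p + q)\<^sup>2 \<le> 2 * p\<^sup>2 + 2 * q\<^sup>2"
  using zero_le_power2[of "p - q"] by (simp add: power2_eq_square algebra_simps)

lemma power2_diff_le_near:
  fixes t c x :: real
  assumes "\<bar>t - c\<bar> \<le> 1 / real (Suc n)" "n > 0"
  shows "(t - x)\<^sup>2 \<le> 2 * (c - x)\<^sup>2 + 2 / n"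
proof -
  have "(t - c)\<^sup>2 = \<bar>t - c\<bar> * \<bar>t - c\<bar>"
    by (simp add: power2_eq_square)
  also have "\<dots> \<le> 1 * (1 / n)"
  proof -
    have "1 / real (Suc n) \<le> 1 / n" "1 / real (Suc n) \<le> 1"
      using assms(2) by (auto simp: frac_le)
    with assms(1) show ?thesis
      by (intro mult_mono) (linarith | simp)+
  qed
  finally have "(t - c)\<^sup>2 \<le> 1 / n"
    by simp
  moreover have "(t - x)\<^sup>2 \<le> 2 * (c - x)\<^sup>2 + 2 * (t - c)\<^sup>2"
    using power2_sum_le[of "c - x" "t - c"] by simp
  ultimately show ?thesis
    by linarith
qed

lemma abs_integral_minus_const_le:
  fixes g :: "real \<Rightarrow> real"
  assumes "a \<le> b" "continuous_on {a..b} g" "\<And>t. t \<in> {a..b} \<Longrightarrow> \<bar>g t - c\<bar> \<le> B"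
  shows "\<bar>integral {a..b} g - (b - a) * c\<bar> \<le> B * (b - a)"
proof -
  have "integral {a..b} g - (b - a) * c = integral {a..b} (\<lambda>t. g t - c)"
    using assms(1,2) by (simp add: integral_diff integrable_continuous_real)
  also have "\<bar>\<dots>\<bar> \<le> B * (b - a)"
    using integral_bound[of a b "\<lambda>t. g t - c" B] assms continuous_on_diff[OF assms(2) continuous_on_const]
    by simp
  finally show ?thesis .
qed

lemma continuous_on_compact_quadratic_modulus:
  fixes f :: "'a::metric_space \<Rightarrow> 'b::metric_space"
  assumes "compact S" "continuous_on S f" "e > 0"
  obtains C where "C \<ge> 0" "\<And>p q. p \<in> S \<Longrightarrow> q \<in> S \<Longrightarrow> dist (f p) (f q) \<le> e + C * (dist p q)\<^sup>2"
proof -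
  obtain d where "d > 0" and d: "\<And>p q. p \<in> S \<Longrightarrow> q \<in> S \<Longrightarrow> dist q p < d \<Longrightarrow> dist (f q) (f p) < e"
    using uniformly_continuous_onE[OF compact_uniformly_continuous[OF assms(2,1)] assms(3)] by metis
  have bounded: "bounded (f ` S)"
    using assms by (intro compact_imp_bounded compact_continuous_image)
  define C where "C = diameter (f ` S) / d\<^sup>2"
  show thesis
  proof
    show "C \<ge> 0"
      by (simp add: C_def diameter_ge_0[OF bounded])
    fix p q assume "p \<in> S" "q \<in> S"
    show "dist (f p) (f q) \<le> e + C * (dist p q)\<^sup>2"
    proof (cases "dist p q < d")
      case True
      then show ?thesis
        using d[of q p] \<open>p \<in> S\<close> \<open>q \<in> S\<close> \<open>C \<ge> 0\<close> by (simp add: dist_commute add_increasing2)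
    next
      case False
      then have "d\<^sup>2 \<le> (dist p q)\<^sup>2"
        using \<open>d > 0\<close> by (simp add: power_mono)
      then have "diameter (f ` S) \<le> C * (dist p q)\<^sup>2"
        using \<open>d > 0\<close> diameter_ge_0[OF bounded] by (simp add: C_def field_simps mult_left_mono)
      moreover have "dist (f p) (f q) \<le> diameter (f ` S)"
        using \<open>p \<in> S\<close> \<open>q \<in> S\<close> by (intro diameter_bounded_bound bounded) auto
      ultimately show ?thesis
        using \<open>e > 0\<close> by linarith
    qed
  qed
qed

lemma tendsto_SUP_abs_zeroI:
  fixes g :: "nat \<Rightarrow> 'a \<Rightarrow> real"
  assumes "S \<noteq> {}" and small: "\<And>e. e > 0 \<Longrightarrow> eventually (\<lambda>N. \<forall>p\<in>S. \<bar>g N p\<bar> \<le> e) sequentially"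
  shows "(\<lambda>N. SUP p\<in>S. \<bar>g N p\<bar>) \<longlonglongrightarrow> 0"
proof (rule tendstoI)
  fix r :: real assume "r > 0"
  have "eventually (\<lambda>N. \<forall>p\<in>S. \<bar>g N p\<bar> \<le> r / 2) sequentially"
    using \<open>r > 0\<close> by (intro small) simp
  then show "eventually (\<lambda>N. dist (SUP p\<in>S. \<bar>g N p\<bar>) 0 < r) sequentially"
  proof (rule eventually_mono)
    fix N assume bound: "\<forall>p\<in>S. \<bar>g N p\<bar> \<le> r / 2"
    have upper: "(SUP p\<in>S. \<bar>g N p\<bar>) \<le> r / 2"
      using assms(1) bound by (intro cSUP_least) auto
    obtain p where "p \<in> S"
      using assms(1) by blast
    then have "0 \<le> (SUP p\<in>S. \<bar>g N p\<bar>)"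
      using bound by (intro cSUP_upper2[of _ _ p]) (auto intro: bdd_aboveI2[where M = "r / 2"])
    then show "dist (SUP p\<in>S. \<bar>g N p\<bar>) 0 < r"
      using upper \<open>r > 0\<close> by simp
  qed
qed

lemma continuous_markov_kernel_slice:
  assumes "continuous_markov_kernel_of A K" "y \<in> {0..1}"
  shows "continuous_on {0..1} (\<lambda>t. measure (K t) {0..y})"
proof -
  have "continuous_on ({0..1} \<times> {0..1}) (\<lambda>(x, y). measure (K x) {0..y})"
    using assms(1) by (simp add: continuous_markov_kernel_of_def)
  then have "continuous_on {0..1} (\<lambda>t. (\<lambda>(x, y). measure (K x) {0..y}) (t, y))"
    by (rule continuous_on_compose2) (use assms(2) in \<open>auto intro!: continuous_intros\<close>)
  then show ?thesis
    by simp
qed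

lemma continuous_markov_kernel_integral:
  assumes "continuous_markov_kernel_of A K" "x \<in> {0..1}" "y \<in> {0..1}"
  shows "A x y = integral {0..x} (\<lambda>t. measure (K t) {0..y})"
proof -
  obtain \<mu> where \<mu>: "copula_measure A \<mu>"
    and disintegration: "\<forall>E1\<in>sets (restrict_space borel {0..1::real}).
        \<forall>E2\<in>sets (restrict_space borel {0..1::real}).
          (LINT t:E1|lborel. measure (K t) E2) = measure \<mu> (E1 \<times> E2)"
    using assms(1) unfolding continuous_markov_kernel_of_def markov_kernel_of_def by blast
  have interval: "{0..z} \<in> sets (restrict_space borel {0..1::real})" if "z \<in> {0..1}" for z
    using that by (auto simp: sets_restrict_space_iff)
  have "continuous_on {0..x} (\<lambda>t. measure (K t) {0..y})"
    using assms(2) by (intro continuous_on_subset[OF continuous_markov_kernel_slice[OF assms(1,3)]]) simp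
  then have integrable: "set_integrable lborel {0..x} (\<lambda>t. measure (K t) {0..y})"
    unfolding set_integrable_def by (intro borel_integrable_compact) auto
  have "A x y = measure \<mu> ({0..x} \<times> {0..y})"
    using \<mu> assms(2,3) by (simp add: copula_measure_def)
  also have "\<dots> = (LINT t:{0..x}|lborel. measure (K t) {0..y})"
    using disintegration interval assms(2,3) by simp
  also have "\<dots> = integral {0..x} (\<lambda>t. measure (K t) {0..y})"
    by (rule set_borel_integral_eq_integral(2)[OF integrable])
  finally show ?thesis .
qed

context
  fixes A F :: "real \<Rightarrow> real \<Rightarrow> real" and e C :: real
  assumes rep: "\<And>x y. x \<in> {0..1} \<Longrightarrow> y \<in> {0..1} \<Longrightarrow> A x y = integral {0..x} (\<lambda>t. F t y)"
    and cont: "\<And>y. y \<in> {0..1} \<Longrightarrow> continuous_on {0..1} (\<lambda>t. F t y)"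
    and modulus: "\<And>s u x y. s \<in> {0..1} \<Longrightarrow> u \<in> {0..1} \<Longrightarrow> x \<in> {0..1} \<Longrightarrow> y \<in> {0..1} \<Longrightarrow>
      \<bar>F s u - F x y\<bar> \<le> e + C * ((s - x)\<^sup>2 + (u - y)\<^sup>2)"
    and C_nonneg: "C \<ge> 0"
begin

lemma bernstein_difference_quotient_bound:
  assumes "n > 0" "i \<le> n" "v \<in> {0..1}" "x \<in> {0..1}" "y \<in> {0..1}"
  shows "\<bar>real (Suc n) * (A (real (Suc i) / real (Suc n)) v - A (real i / real (Suc n)) v) - F x y\<bar>
    \<le> e + 2 * C / n + 2 * C * (real i / n - x)\<^sup>2 + C * (v - y)\<^sup>2"
    (is "_ \<le> ?B")
proof -
  define a where "a = real i / real (Suc n)"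
  define b where "b = real (Suc i) / real (Suc n)"
  have ab: "0 \<le> a" "a \<le> b" "b \<le> 1" "b - a = 1 / real (Suc n)"
    using assms(2) by (auto simp: a_def b_def field_simps)
  have node: "a \<le> real i / n" "real i / n \<le> b"
    using assms(1,2) by (auto simp: a_def b_def field_simps)
  have cont_ab: "continuous_on {a..b} (\<lambda>t. F t v)"
    using ab by (intro continuous_on_subset[OF cont[OF assms(3)]]) auto
  have increment: "A b v - A a v = integral {a..b} (\<lambda>t. F t v)"
  proof -
    have "(\<lambda>t. F t v) integrable_on {0..b}"
      using ab by (intro integrable_continuous_real continuous_on_subset[OF cont[OF assms(3)]]) auto
    from Henstock_Kurzweil_Integration.integral_combine[OF ab(1,2) this] show ?thesis
      using rep[of b v] rep[of a v] ab assms(3) by simp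
  qed
  have average: "\<bar>integral {a..b} (\<lambda>t. F t v) - (b - a) * F x y\<bar> \<le> ?B * (b - a)"
  proof (rule abs_integral_minus_const_le[OF ab(2) cont_ab])
    fix t assume t: "t \<in> {a..b}"
    have "\<bar>t - real i / n\<bar> \<le> 1 / real (Suc n)"
      using t node ab by auto
    then have "(t - x)\<^sup>2 \<le> 2 * (real i / n - x)\<^sup>2 + 2 / n"
      using assms(1) by (rule power2_diff_le_near)
    then have "C * ((t - x)\<^sup>2 + (v - y)\<^sup>2) \<le> C * (2 * (real i / n - x)\<^sup>2 + 2 / n + (v - y)\<^sup>2)"
      using C_nonneg by (intro mult_left_mono) auto
    moreover have "t \<in> {0..1}"
      using t ab by auto
    ultimately show "\<bar>F t v - F x y\<bar> \<le> ?B"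
      using modulus[of t v x y] assms(3-5) by (simp add: algebra_simps)
  qed
  have "real (Suc n) * (A b v - A a v) - F x y
      = real (Suc n) * (integral {a..b} (\<lambda>t. F t v) - (b - a) * F x y)"
    unfolding increment ab(4) by (simp add: right_diff_distrib)
  also have "\<bar>\<dots>\<bar> \<le> real (Suc n) * (?B * (b - a))"
    unfolding abs_mult abs_of_nat using average by (intro mult_left_mono) auto
  also have "\<dots> = ?B"
    unfolding ab(4) by simp
  finally show ?thesis
    by (simp add: a_def b_def)
qed

lemma bernstein_kernel_error_le:
  assumes "\<And>t. t \<in> {0..1} \<Longrightarrow> A 0 t = 0" "\<And>t. t \<in> {0..1} \<Longrightarrow> A t 0 = 0"
    and "n > 0" "x \<in> {0..1}" "y \<in> {0..1}"
  shows "\<bar>bernstein_kernel (Suc n) A x y - F x y\<bar> \<le> e + 5 * C / n"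
proof -
  define D where "D i j = real (Suc n) *
    (A (real (Suc i) / real (Suc n)) (real j / real (Suc n))
      - A (real i / real (Suc n)) (real j / real (Suc n))) - F x y" for i j :: nat
  have "bernstein_kernel (Suc n) A x y - F x y
      = (\<Sum>i\<le>n. \<Sum>j\<le>Suc n. D i j * Bernstein n i x * Bernstein (Suc n) j y)"
  proof -
    have "(\<Sum>i\<le>n. \<Sum>j\<le>Suc n. F x y * Bernstein n i x * Bernstein (Suc n) j y) = F x y"
      by (simp flip: sum_distrib_left sum_distrib_right)
    then show ?thesis
      using assms(1,2) unfolding D_def
      by (subst bernstein_kernel_eq_Bernstein_sum) (simp_all add: left_diff_distrib sum_subtractf)
  qed
  also have "\<bar>\<dots>\<bar> \<le> (e + 2 * C / n) + 2 * C / n + C / real (Suc n)"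
  proof (rule abs_sum_Bernstein_product_le)
    fix i j assume "i \<le> n" "j \<le> Suc n"
    then show "\<bar>D i j\<bar>
        \<le> (e + 2 * C / n) + 2 * C * (real i / n - x)\<^sup>2 + C * (real j / real (Suc n) - y)\<^sup>2"
      using bernstein_difference_quotient_bound[of n i "real j / real (Suc n)" x y] assms(3-5)
      by (simp add: D_def)
  qed (use assms(3-5) C_nonneg in auto)
  also have "\<dots> \<le> e + 5 * C / n"
  proof -
    have "C / real (Suc n) \<le> C / n"
      using C_nonneg \<open>n > 0\<close> by (intro divide_left_mono) auto
    then show ?thesis
      by simp
  qed
  finally show ?thesis .
qed

end

lemma continuous_markov_kernel_bernstein_error:
  assumes "is_copula A" "continuous_markov_kernel_of A K" "e > 0"
  obtains C where "\<And>n x y. n > 0 \<Longrightarrow> x \<in> {0..1} \<Longrightarrow> y \<in> {0..1} \<Longrightarrow>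
    \<bar>bernstein_kernel (Suc n) A x y - measure (K x) {0..y}\<bar> \<le> e + 5 * C / n"
proof -
  define F where "F x y = measure (K x) {0..y}" for x y
  let ?S = "{0..1::real} \<times> {0..1::real}"
  have A0: "A 0 t = 0" "A t 0 = 0" if "t \<in> {0..1}" for t
    using assms(1) that by (auto simp: is_copula_def)
  have rep: "A x y = integral {0..x} (\<lambda>t. F t y)" if "x \<in> {0..1}" "y \<in> {0..1}" for x y
    using continuous_markov_kernel_integral[OF assms(2) that] by (simp add: F_def)
  have cont: "continuous_on {0..1} (\<lambda>t. F t y)" if "y \<in> {0..1}" for y
    using continuous_markov_kernel_slice[OF assms(2) that] by (simp add: F_def)
  have "continuous_on ?S (\<lambda>(x, y). F x y)"
    using assms(2) by (simp add: continuous_markov_kernel_of_def F_def)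
  then obtain C where "C \<ge> 0"
    and C: "\<And>p q. p \<in> ?S \<Longrightarrow> q \<in> ?S \<Longrightarrow>
      dist ((\<lambda>(x, y). F x y) p) ((\<lambda>(x, y). F x y) q) \<le> e + C * (dist p q)\<^sup>2"
    using continuous_on_compact_quadratic_modulus[OF compact_Times[OF compact_Icc compact_Icc] _ assms(3)]
    by blast
  have modulus: "\<bar>F s u - F x y\<bar> \<le> e + C * ((s - x)\<^sup>2 + (u - y)\<^sup>2)"
    if "s \<in> {0..1}" "u \<in> {0..1}" "x \<in> {0..1}" "y \<in> {0..1}" for s u x y
    using C[of "(s, u)" "(x, y)"] that by (simp add: dist_Pair_Pair dist_real_def)
  show thesis
    using bernstein_kernel_error_le[OF rep cont modulus \<open>C \<ge> 0\<close> A0(1) A0(2)]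
    by (intro that) (simp add: F_def)
qed

theorem lemma4p1:
  fixes A :: "real \<Rightarrow> real \<Rightarrow> real" and K :: "real \<Rightarrow> real measure"
  assumes "is_copula A"
    and "continuous_markov_kernel_of A K"
  shows "(\<lambda>N. SUP p\<in>{0..1} \<times> {0..1}.
            \<bar>bernstein_kernel N A (fst p) (snd p) - measure (K (fst p)) {0..snd p}\<bar>)
         \<longlonglongrightarrow> 0"
proof (rule tendsto_SUP_abs_zeroI)
  fix e :: real assume "e > 0"
  then obtain C where C: "\<And>n x y. n > 0 \<Longrightarrow> x \<in> {0..1} \<Longrightarrow> y \<in> {0..1} \<Longrightarrow>
      \<bar>bernstein_kernel (Suc n) A x y - measure (K x) {0..y}\<bar> \<le> e / 2 + 5 * C / n"
    using continuous_markov_kernel_bernstein_error[OF assms, of "e / 2"] by auto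
  have "eventually (\<lambda>n. 5 * C / real n < e / 2) sequentially"
    using \<open>e > 0\<close> by (intro order_tendstoD(2)[OF lim_const_over_n]) simp
  moreover have "eventually (\<lambda>n. 0 < n) sequentially"
    by (rule eventually_gt_at_top)
  ultimately have "eventually (\<lambda>n. \<forall>p\<in>{0..1} \<times> {0..1}.
      \<bar>bernstein_kernel (Suc n) A (fst p) (snd p) - measure (K (fst p)) {0..snd p}\<bar> \<le> e) sequentially"
  proof eventually_elim
    case (elim n)
    show ?case
    proof
      fix p :: "real \<times> real" assume "p \<in> {0..1} \<times> {0..1}"
      then have "fst p \<in> {0..1}" "snd p \<in> {0..1}"
        by auto
      from C[OF elim(2) this] elim(1)
      show "\<bar>bernstein_kernel (Suc n) A (fst p) (snd p) - measure (K (fst p)) {0..snd p}\<bar> \<le> e"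
        by linarith
    qed
  qed
  then show "eventually (\<lambda>N. \<forall>p\<in>{0..1} \<times> {0..1}.
      \<bar>bernstein_kernel N A (fst p) (snd p) - measure (K (fst p)) {0..snd p}\<bar> \<le> e) sequentially"
    by (subst eventually_sequentially_Suc[symmetric])
qed simp

end
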